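(* Let $X$ be an $n$-dimensional polyhedral normed space and let $2 \leq k \leq n-1$. Let $Y \subseteq X$ be a $k$-dimensional subspace such that every projection in $\mathcal{P}_{\min}(X, Y)$ has at most $m$ different norming pairs, where $m$ is a fixed positive integer. Then there exists $r>0$ such that for every $k$-dimensional subspace $Y_0 \subseteq X$ with $d(Y, Y_0) \leq r$, every projection in $\mathcal{P}_{\min}(X, Y_0)$ has at most $m$ different norming pairs.
   Context: A normed space $X=(\mathbb{R}^n,\|\cdot\|)$ is polyhedral if its unit ball is a convex polytope. A projection onto $Y$ is a linear $P:X\to Y$ with $P|_Y=\mathrm{id}_Y$; $\lambda(Y,X)$ is the infimum of their operator norms and $\mathcal{P}_{\min}(X,Y)$ the set of projections of norm $\lambda(Y,X)$. A norming pair for a projection $P$ is a pair $(x,f)\in \mathrm{ext}\,B_X\times \mathrm{ext}\,B_{X^*}$ (extreme points of the unit balls of $X$ and $X^*$) with $f(P(x))=\|P\|$. For $k$-dimensional subspaces $Y,Z$, $d(Y,Z)$ is the Hausdorff distance between the unit spheres of $Y$ and $Z$. *)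

theory Defs
  imports "HOL-Analysis.Analysis"
begin

definition is_norm :: "(real^'n \<Rightarrow> real) \<Rightarrow> bool" where
  "is_norm N \<longleftrightarrow> (\<forall>x. 0 \<le> N x) \<and> (\<forall>x. N x = 0 \<longleftrightarrow> x = 0)
     \<and> (\<forall>c x. N (c *\<^sub>R x) = \<bar>c\<bar> * N x) \<and> (\<forall>x y. N (x + y) \<le> N x + N y)"

definition unit_ball :: "(real^'n \<Rightarrow> real) \<Rightarrow> (real^'n) set" where
  "unit_ball N = {x. N x \<le> 1}"

definition polyhedral_norm :: "(real^'n \<Rightarrow> real) \<Rightarrow> bool" where
  "polyhedral_norm N \<longleftrightarrow> is_norm N \<and> polytope (unit_ball N)"

text \<open>Dual unit ball; functionals f on real^'n are represented by vectors u, f x = u \<bullet> x.\<close>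
definition dual_unit_ball :: "(real^'n \<Rightarrow> real) \<Rightarrow> (real^'n) set" where
  "dual_unit_ball N = {u. \<forall>x. N x \<le> 1 \<longrightarrow> \<bar>u \<bullet> x\<bar> \<le> 1}"

definition op_norm :: "(real^'n \<Rightarrow> real) \<Rightarrow> (real^'n \<Rightarrow> real^'n) \<Rightarrow> real" where
  "op_norm N P = Sup ((\<lambda>x. N (P x)) ` unit_ball N)"

definition is_projection :: "(real^'n) set \<Rightarrow> (real^'n \<Rightarrow> real^'n) \<Rightarrow> bool" where
  "is_projection Y P \<longleftrightarrow> linear P \<and> (\<forall>x. P x \<in> Y) \<and> (\<forall>y\<in>Y. P y = y)"

definition rel_proj_const :: "(real^'n \<Rightarrow> real) \<Rightarrow> (real^'n) set \<Rightarrow> real" where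
  "rel_proj_const N Y = Inf (op_norm N ` {P. is_projection Y P})"

definition min_projections :: "(real^'n \<Rightarrow> real) \<Rightarrow> (real^'n) set \<Rightarrow> (real^'n \<Rightarrow> real^'n) set" where
  "min_projections N Y = {P. is_projection Y P \<and> op_norm N P = rel_proj_const N Y}"

definition norming_pairs :: "(real^'n \<Rightarrow> real) \<Rightarrow> (real^'n \<Rightarrow> real^'n) \<Rightarrow> ((real^'n) \<times> (real^'n)) set" where
  "norming_pairs N P = {(x, u). (x extreme_point_of (unit_ball N)) \<and> (u extreme_point_of (dual_unit_ball N))
                                \<and> u \<bullet> P x = op_norm N P}"

definition unit_sphere_in :: "(real^'n \<Rightarrow> real) \<Rightarrow> (real^'n) set \<Rightarrow> (real^'n) set" where
  "unit_sphere_in N Y = {y \<in> Y. N y = 1}"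

definition subspace_dist :: "(real^'n \<Rightarrow> real) \<Rightarrow> (real^'n) set \<Rightarrow> (real^'n) set \<Rightarrow> real" where
  "subspace_dist N Y Z =
     max (SUP a\<in>unit_sphere_in N Y. INF b\<in>unit_sphere_in N Z. N (a - b))
         (SUP b\<in>unit_sphere_in N Z. INF a\<in>unit_sphere_in N Y. N (a - b))"

end

(*
  Suppose the claim fails. Then there are k-dimensional subspaces Z_j converging to Y and
  minimal projections Q_j onto Z_j with more than m norming pairs. Restricting a projection
  onto Y to a nearby Z, inverting it there and composing gives a projection onto Z of almost
  the same norm; hence the constants lambda(Z_j) stay bounded and their limsup is at most
  lambda(Y). By compactness a subsequence of the Q_j converges to a projection P onto Y of norm
  at most lambda(Y), i.e. a minimal one. Since both unit balls are polytopes there are only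
  finitely many candidate pairs, and a pair that does not norm P fails to norm Q_j for all large
  j. So eventually Q_j has no more norming pairs than P, that is at most m: a contradiction.
*)

theory Submission
  imports Defs
begin

definition approx_by :: "(real^'n \<Rightarrow> real) \<Rightarrow> real \<Rightarrow> (real^'n) set \<Rightarrow> (real^'n) set \<Rightarrow> bool" where
  "approx_by N t Y Z \<longleftrightarrow> (\<forall>y\<in>Y. \<exists>z\<in>Z. N (y - z) \<le> t * N y)"

lemma projection_exists: "subspace Y \<Longrightarrow> \<exists>P. is_projection Y P"
  using linear_exists_left_inverse_on[OF linear_id, of Y] by (auto simp: is_projection_def)

lemma linear_maps_convergent_subseq:
  fixes Q :: "nat \<Rightarrow> 'a::euclidean_space \<Rightarrow> 'b::euclidean_space"
  assumes lin: "\<And>j. linear (Q j)" and bound: "\<And>j x. norm (Q j x) \<le> B * norm x" "0 \<le> B"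
  shows "\<exists>\<sigma> P. strict_mono \<sigma> \<and> linear P \<and> (\<forall>x. (\<lambda>j. Q (\<sigma> j) x) \<longlonglongrightarrow> P x)"
proof -
  define F where "F j = Blinfun (Q j)" for j
  have F: "blinfun_apply (F j) = Q j" for j
    unfolding F_def using lin by (simp add: bounded_linear_Blinfun_apply linear_conv_bounded_linear)
  have "norm (F j) \<le> B" for j
    using bound by (intro norm_blinfun_bound) (auto simp: F)
  then have "bounded (range F)" by (auto simp: bounded_iff)
  then obtain \<sigma> L where "strict_mono \<sigma>" "(F \<circ> \<sigma>) \<longlonglongrightarrow> L"
    using bounded_imp_convergent_subsequence by blast
  moreover have "(\<lambda>j. Q (\<sigma> j) x) \<longlonglongrightarrow> blinfun_apply L x" if "(F \<circ> \<sigma>) \<longlonglongrightarrow> L" for x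
    using blinfun.tendsto[OF that tendsto_const, of x] by (simp add: F o_def)
  moreover have "linear (blinfun_apply L)"
    using blinfun.bounded_linear_right by (rule bounded_linear.linear)
  ultimately show ?thesis by blast
qed

context
  fixes N :: "real^'n \<Rightarrow> real"
  assumes N: "is_norm N"
begin

lemma N_nonneg: "0 \<le> N x"
  using N unfolding is_norm_def by auto

lemma N_eq_0_iff: "N x = 0 \<longleftrightarrow> x = 0"
  using N unfolding is_norm_def by auto

lemma N_0 [simp]: "N 0 = 0"
  by (simp add: N_eq_0_iff)

lemma N_pos: "x \<noteq> 0 \<Longrightarrow> 0 < N x"
  using N_nonneg N_eq_0_iff by (metis less_eq_real_def)

lemma N_scaleR: "N (c *\<^sub>R x) = \<bar>c\<bar> * N x"
  using N unfolding is_norm_def by auto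

lemma N_triangle: "N (x + y) \<le> N x + N y"
  using N unfolding is_norm_def by auto

lemma N_minus: "N (- x) = N x"
  using N_scaleR[of "-1" x] by simp

lemma N_minus_commute: "N (x - y) = N (y - x)"
  using N_minus[of "x - y"] by simp

lemma N_triangle_diff: "N (x - z) \<le> N (x - y) + N (y - z)"
  using N_triangle[of "x - y" "y - z"] by simp

lemma N_normalize: "x \<noteq> 0 \<Longrightarrow> N ((1 / N x) *\<^sub>R x) = 1"
  using N_pos[of x] by (simp add: N_scaleR)

lemma convex_on_N: "convex_on UNIV N"
proof (rule convex_onI)
  fix x y :: "real^'n" and u :: real
  assume "0 < u" "u < 1"
  then show "N ((1 - u) *\<^sub>R x + u *\<^sub>R y) \<le> (1 - u) * N x + u * N y"
    using N_triangle[of "(1 - u) *\<^sub>R x" "u *\<^sub>R y"] by (simp add: N_scaleR)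
qed auto

lemma continuous_on_N: "continuous_on UNIV N"
  by (rule convex_on_continuous[OF open_UNIV convex_on_N])

lemma tendsto_N: "(f \<longlongrightarrow> l) F \<Longrightarrow> ((\<lambda>j. N (f j)) \<longlongrightarrow> N l) F"
  using continuous_on_N by (auto intro: isCont_tendsto_compose simp: continuous_on_eq_continuous_at)

lemma N_equiv_norm: "\<exists>c>0. \<exists>C>0. \<forall>x. c * norm x \<le> N x \<and> N x \<le> C * norm x"
proof -
  have S: "compact (sphere (0::real^'n) 1)" "sphere (0::real^'n) 1 \<noteq> {}"
    using vector_choose_size[of 1] by auto
  have cont: "continuous_on (sphere 0 1) N"
    using continuous_on_N continuous_on_subset by blast
  obtain a where a: "norm a = 1" "\<And>x. norm x = 1 \<Longrightarrow> N a \<le> N x"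
    using continuous_attains_inf[OF S cont] by auto
  obtain b where "\<forall>x\<in>sphere 0 1. N x \<le> N b"
    using continuous_attains_sup[OF S cont] by blast
  then have b: "\<And>x. norm x = 1 \<Longrightarrow> N x \<le> N b" by simp
  have "N a * norm x \<le> N x \<and> N x \<le> N b * norm x" for x
  proof (cases "x = 0")
    case False
    then have "x = norm x *\<^sub>R ((1 / norm x) *\<^sub>R x)" "norm ((1 / norm x) *\<^sub>R x) = 1" by auto
    then show ?thesis
      using a(2) b by (metis N_scaleR abs_norm_cancel mult.commute mult_left_mono norm_ge_zero)
  qed simp
  moreover have "N a > 0" using a(1) by (intro N_pos) auto
  moreover from this have "N b > 0" using b[OF a(1)] by linarith
  ultimately show ?thesis by blast
qed

lemma tendsto_of_N_diff:
  assumes lim: "((\<lambda>j. N (f j - l)) \<longlongrightarrow> 0) F"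
  shows "(f \<longlongrightarrow> l) F"
proof -
  obtain c where c: "c > 0" "\<And>x. c * norm x \<le> N x" using N_equiv_norm by blast
  have "((\<lambda>j. N (f j - l) / c) \<longlongrightarrow> 0 / c) F"
    by (intro tendsto_intros lim) (use c in simp)
  then show "(f \<longlongrightarrow> l) F"
    by (rule metric_tendsto_imp_tendsto)
      (use c N_nonneg in \<open>auto simp: dist_norm pos_le_divide_eq mult.commute\<close>)
qed

lemma compact_unit_ball: "compact (unit_ball N)"
unfolding compact_eq_bounded_closed
proof
  obtain c where c: "c > 0" "\<And>x. c * norm x \<le> N x" using N_equiv_norm by blast
  have "unit_ball N \<subseteq> cball 0 (1 / c)"
    unfolding unit_ball_def using c
    by (auto simp: pos_le_divide_eq mult.commute intro: order_trans[OF c(2)])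
  then show "bounded (unit_ball N)" by (rule bounded_subset[OF bounded_cball])
  show "closed (unit_ball N)"
    unfolding unit_ball_def by (intro closed_Collect_le continuous_on_N continuous_on_const)
qed

lemma zero_in_unit_ball: "0 \<in> unit_ball N"
  unfolding unit_ball_def by simp

lemma normalize_in_unit_ball: "(1 / N x) *\<^sub>R x \<in> unit_ball N"
  by (cases "x = 0") (simp_all add: unit_ball_def N_normalize)

lemma bdd_above_op_norm:
  assumes "linear P"
  shows "bdd_above ((\<lambda>x. N (P x)) ` unit_ball N)"
proof -
  have "continuous_on (unit_ball N) P"
    using assms by (intro linear_continuous_on) (simp add: linear_conv_bounded_linear)
  moreover have "continuous_on (P ` unit_ball N) N"
    using continuous_on_N continuous_on_subset by blast
  ultimately have "continuous_on (unit_ball N) (N \<circ> P)" by (rule continuous_on_compose)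
  then have "compact ((N \<circ> P) ` unit_ball N)"
    by (rule compact_continuous_image[OF _ compact_unit_ball])
  then show ?thesis by (simp add: image_comp bounded_imp_bdd_above compact_imp_bounded)
qed

lemma N_le_op_norm: "linear P \<Longrightarrow> x \<in> unit_ball N \<Longrightarrow> N (P x) \<le> op_norm N P"
  unfolding op_norm_def by (rule cSUP_upper) (auto intro: bdd_above_op_norm)

lemma op_norm_nonneg: "linear P \<Longrightarrow> 0 \<le> op_norm N P"
  using N_le_op_norm[OF _ zero_in_unit_ball, of P] N_nonneg[of "P 0"] by linarith

lemma N_le_op_norm_mult:
  assumes "linear P"
  shows "N (P x) \<le> op_norm N P * N x"
proof (cases "x = 0")
  case True
  then show ?thesis using linear_0[OF assms] by simp
next
  case False
  have "N (P ((1 / N x) *\<^sub>R x)) \<le> op_norm N P"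
    by (rule N_le_op_norm[OF assms normalize_in_unit_ball])
  then show ?thesis
    using N_pos[OF False] by (simp add: linear_scale[OF assms] N_scaleR divide_le_eq)
qed

lemma op_norm_least: "(\<And>x. x \<in> unit_ball N \<Longrightarrow> N (P x) \<le> c) \<Longrightarrow> op_norm N P \<le> c"
  unfolding op_norm_def by (rule cSUP_least) (use zero_in_unit_ball in auto)

lemma op_norm_le:
  assumes "\<And>x. N (P x) \<le> c * N x" "0 \<le> c"
  shows "op_norm N P \<le> c"
proof (rule op_norm_least)
  fix x assume "x \<in> unit_ball N"
  then have "c * N x \<le> c" using assms(2) by (simp add: unit_ball_def mult_left_le)
  then show "N (P x) \<le> c" using assms(1)[of x] by linarith
qed

lemma less_op_normD: "c < op_norm N P \<Longrightarrow> \<exists>x\<in>unit_ball N. c < N (P x)"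
  unfolding op_norm_def using zero_in_unit_ball less_cSupD[of "(\<lambda>x. N (P x)) ` unit_ball N" c]
  by blast

lemma inner_le_N:
  assumes "u \<in> dual_unit_ball N"
  shows "u \<bullet> y \<le> N y"
proof (cases "y = 0")
  case False
  have "\<bar>u \<bullet> ((1 / N y) *\<^sub>R y)\<bar> \<le> 1"
    using assms normalize_in_unit_ball unfolding dual_unit_ball_def unit_ball_def by blast
  then show ?thesis using N_pos[OF False] by (simp add: abs_le_iff divide_le_eq)
qed simp

lemma rel_proj_const_le: "is_projection Y P \<Longrightarrow> rel_proj_const N Y \<le> op_norm N P"
  unfolding rel_proj_const_def
  by (rule cInf_lower) (auto intro!: bdd_belowI[where m=0] op_norm_nonneg simp: is_projection_def)

lemma rel_proj_const_greatest:
  "\<exists>P. is_projection Y P \<Longrightarrow> (\<And>P. is_projection Y P \<Longrightarrow> c \<le> op_norm N P)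
    \<Longrightarrow> c \<le> rel_proj_const N Y"
  unfolding rel_proj_const_def by (rule cInf_greatest) auto

lemma approx_by_of_SUP_INF_le:
  assumes Y: "subspace Y" and Z: "subspace Z" "v \<in> Z" "v \<noteq> 0" and "0 < r"
    and le: "(SUP a\<in>unit_sphere_in N Y. INF b\<in>unit_sphere_in N Z. N (a - b)) \<le> r"
  shows "approx_by N (2 * r) Y Z"
  unfolding approx_by_def
proof
  fix y assume "y \<in> Y"
  show "\<exists>z\<in>Z. N (y - z) \<le> 2 * r * N y"
  proof (cases "y = 0")
    case True
    then show ?thesis using subspace_0[OF Z(1)] by (intro bexI[of _ 0]) auto
  next
    case False
    define b0 where "b0 = (1 / N v) *\<^sub>R v"
    have b0: "b0 \<in> unit_sphere_in N Z"
      unfolding b0_def unit_sphere_in_def using Z by (simp add: N_normalize subspace_scale)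
    define a where "a = (1 / N y) *\<^sub>R y"
    have a: "a \<in> unit_sphere_in N Y"
      unfolding a_def unit_sphere_in_def using False \<open>y \<in> Y\<close> Y
      by (simp add: N_normalize subspace_scale)
    have bdd: "bdd_below ((\<lambda>b. N (a' - b)) ` unit_sphere_in N Z)" for a'
      by (rule bdd_belowI2[where m=0]) (rule N_nonneg)
    have "(INF b\<in>unit_sphere_in N Z. N (a' - b)) \<le> 2" if "a' \<in> unit_sphere_in N Y" for a'
    proof -
      have "(INF b\<in>unit_sphere_in N Z. N (a' - b)) \<le> N (a' - b0)" by (rule cINF_lower[OF bdd b0])
      also have "\<dots> \<le> N a' + N b0" using N_triangle[of a' "- b0"] by (simp add: N_minus)
      finally show ?thesis using that b0 unfolding unit_sphere_in_def by simp
    qed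
    then have "bdd_above ((\<lambda>a'. INF b\<in>unit_sphere_in N Z. N (a' - b)) ` unit_sphere_in N Y)"
      by (rule bdd_aboveI2)
    then have "(INF b\<in>unit_sphere_in N Z. N (a - b)) < 2 * r"
      using cSUP_upper[OF a] le \<open>0 < r\<close> by fastforce
    then obtain b where b: "b \<in> unit_sphere_in N Z" "N (a - b) < 2 * r"
      using cInf_lessD[of "(\<lambda>b. N (a - b)) ` unit_sphere_in N Z"] b0 by blast
    have "y - N y *\<^sub>R b = N y *\<^sub>R (a - b)"
      unfolding a_def using N_pos[OF False] by (simp add: algebra_simps)
    then have "N (y - N y *\<^sub>R b) \<le> 2 * r * N y"
      using b(2) N_pos[OF False] by (simp add: N_scaleR)
    moreover have "N y *\<^sub>R b \<in> Z"
      using b(1) Z(1) unfolding unit_sphere_in_def by (simp add: subspace_scale)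
    ultimately show ?thesis by blast
  qed
qed

lemma approx_by_of_subspace_dist_le:
  assumes "subspace Y" "dim Y > 0" "subspace Z" "dim Z > 0" "0 < r" "subspace_dist N Y Z \<le> r"
  shows "approx_by N (2 * r) Y Z" "approx_by N (2 * r) Z Y"
proof -
  obtain y z where yz: "y \<in> Y" "y \<noteq> 0" "z \<in> Z" "z \<noteq> 0"
    using assms(2,4) by (metis dim_eq_0 less_irrefl singletonI subsetI)
  have "(SUP b\<in>unit_sphere_in N Z. INF a\<in>unit_sphere_in N Y. N (b - a))
      = (SUP b\<in>unit_sphere_in N Z. INF a\<in>unit_sphere_in N Y. N (a - b))"
    by (simp add: N_minus_commute)
  then show "approx_by N (2 * r) Y Z" "approx_by N (2 * r) Z Y"
    using assms(6) yz unfolding subspace_dist_def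
    by (auto intro!: approx_by_of_SUP_INF_le assms(1,3,5))
qed

lemma N_projection_lower_bound:
  assumes Q: "is_projection Y Q" and "approx_by N t Z Y" "z \<in> Z"
  shows "(1 - t * (1 + op_norm N Q)) * N z \<le> N (Q z)"
proof -
  have lin: "linear Q" and QY: "\<And>y. y \<in> Y \<Longrightarrow> Q y = y"
    using Q by (auto simp: is_projection_def)
  obtain y where y: "y \<in> Y" "N (z - y) \<le> t * N z" using assms(2,3) by (auto simp: approx_by_def)
  have "N (Q z - y) = N (Q (z - y))" using QY[OF y(1)] by (simp add: linear_diff[OF lin])
  also have "\<dots> \<le> op_norm N Q * N (z - y)" by (rule N_le_op_norm_mult[OF lin])
  also have "\<dots> \<le> op_norm N Q * (t * N z)" using y(2) by (intro mult_left_mono op_norm_nonneg lin)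
  finally have "N (y - Q z) \<le> op_norm N Q * (t * N z)" by (simp add: N_minus_commute)
  moreover have "N z \<le> N (z - y) + N (y - Q z) + N (Q z)"
    using N_triangle_diff[of z "Q z" y] N_triangle[of "z - Q z" "Q z"] by simp
  ultimately show ?thesis using y(2) by (simp add: algebra_simps)
qed

text \<open>The projection onto Z is obtained by inverting Q on Z: R = (Q restricted to Z)\<inverse> \<circ> Q.\<close>
lemma rel_proj_const_le_of_lower_bound:
  assumes Q: "is_projection Y Q" and "subspace Y" "subspace Z" "dim Z = dim Y" "0 < d"
    and lower: "\<And>z. z \<in> Z \<Longrightarrow> d * N z \<le> N (Q z)"
  shows "rel_proj_const N Z \<le> op_norm N Q / d"
proof -
  have lin: "linear Q" and QY: "\<And>x. Q x \<in> Y" using Q by (auto simp: is_projection_def)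
  have "inj_on Q Z"
  proof (rule linear_inj_on_iff_eq_0[OF lin \<open>subspace Z\<close>, THEN iffD2], intro ballI impI)
    fix z assume "z \<in> Z" "Q z = 0"
    then show "z = 0" using lower[of z] \<open>0 < d\<close> N_nonneg[of z] N_eq_0_iff[of z]
      by (simp add: mult_le_0_iff)
  qed
  then obtain g where g: "range g \<subseteq> Z" "linear g" "\<And>z. z \<in> Z \<Longrightarrow> g (Q z) = z"
    using linear_exists_left_inverse_on[OF lin \<open>subspace Z\<close>] by blast
  have "dim (Q ` Z) = dim Y"
    using dim_image_eq[OF lin, of Z] \<open>inj_on Q Z\<close> \<open>subspace Z\<close> assms(4) by (metis span_eq_iff)
  then have QZ: "Q ` Z = Y"
    using subspace_dim_equal[OF linear_subspace_image[OF lin \<open>subspace Z\<close>] \<open>subspace Y\<close>] QY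
    by (metis image_subsetI order_refl)
  have QgQ: "Q (g (Q x)) = Q x" for x
    using QY[of x] g(3) unfolding QZ[symmetric] by auto
  define R where "R = g \<circ> Q"
  have R: "is_projection Z R"
    unfolding is_projection_def R_def using g lin by (auto intro: linear_compose)
  have "d * N (R x) \<le> op_norm N Q * N x" for x
  proof -
    have "d * N (R x) \<le> N (Q (R x))" using g(1) by (intro lower) (auto simp: R_def)
    also have "\<dots> \<le> op_norm N Q * N x" using N_le_op_norm_mult[OF lin] by (simp add: R_def QgQ)
    finally show ?thesis .
  qed
  then have "op_norm N R \<le> op_norm N Q / d"
    using \<open>0 < d\<close> op_norm_nonneg[OF lin] by (intro op_norm_le) (auto simp: field_simps)
  then show ?thesis using rel_proj_const_le[OF R] by linarith
qed

lemma rel_proj_const_le_of_approx_by: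
  assumes "is_projection Y Q" "subspace Y" "subspace Z" "dim Z = dim Y" "approx_by N t Z Y"
    and "t * (1 + op_norm N Q) < 1"
  shows "rel_proj_const N Z \<le> op_norm N Q / (1 - t * (1 + op_norm N Q))"
proof (rule rel_proj_const_le_of_lower_bound[OF assms(1-4)])
  show "0 < 1 - t * (1 + op_norm N Q)" using assms(6) by linarith
  show "(1 - t * (1 + op_norm N Q)) * N z \<le> N (Q z)" if "z \<in> Z" for z
    using N_projection_lower_bound[OF assms(1,5) that] .
qed

lemma tendsto_of_N_diff_le:
  assumes le: "\<And>j. N (v j - l) \<le> h j" and h: "(h \<longlongrightarrow> 0) F"
  shows "(v \<longlongrightarrow> l) F"
proof (rule tendsto_of_N_diff)
  show "((\<lambda>j. N (v j - l)) \<longlongrightarrow> 0) F"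
    by (rule tendsto_sandwich[OF _ _ tendsto_const h]) (intro always_eventually allI N_nonneg le)+
qed

lemma eventually_rel_proj_const_less:
  assumes Q: "is_projection Y Q" and "subspace Y" "\<And>j. subspace (Z j)" "\<And>j. dim (Z j) = dim Y"
    and "\<And>j. approx_by N (t j) (Z j) Y" "t \<longlonglongrightarrow> 0" "op_norm N Q < c"
  shows "eventually (\<lambda>j. rel_proj_const N (Z j) < c) sequentially"
proof -
  let ?q = "op_norm N Q"
  have "(\<lambda>j. t j * (1 + ?q)) \<longlonglongrightarrow> 0 * (1 + ?q)" by (intro tendsto_intros assms)
  then have small: "eventually (\<lambda>j. t j * (1 + ?q) < 1) sequentially"
    by (intro order_tendstoD(2)) auto
  have "(\<lambda>j. ?q / (1 - t j * (1 + ?q))) \<longlonglongrightarrow> ?q / (1 - 0 * (1 + ?q))"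
    by (intro tendsto_intros assms) auto
  then have "eventually (\<lambda>j. ?q / (1 - t j * (1 + ?q)) < c) sequentially"
    using assms(7) by (intro order_tendstoD(2)) auto
  with small show ?thesis
  proof eventually_elim
    case (elim j)
    then show ?case
      using rel_proj_const_le_of_approx_by[OF Q assms(2,3,4,5)] by fastforce
  qed
qed

lemma min_projections_op_norm_bounded:
  assumes "subspace Y" "\<And>j. subspace (Z j)" "\<And>j. dim (Z j) = dim Y"
    and "\<And>j. approx_by N (t j) (Z j) Y" "t \<longlonglongrightarrow> 0"
    and Q: "\<And>j. Q j \<in> min_projections N (Z j)"
  shows "\<exists>B. \<forall>j. op_norm N (Q j) \<le> B"
proof -
  have Qproj: "is_projection (Z j) (Q j)" "op_norm N (Q j) = rel_proj_const N (Z j)" for j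
    using Q by (auto simp: min_projections_def)
  then have lin: "linear (Q j)" for j by (simp add: is_projection_def)
  obtain R where R: "is_projection Y R" using projection_exists[OF \<open>subspace Y\<close>] by blast
  have "eventually (\<lambda>j. op_norm N (Q j) < op_norm N R + 1) sequentially"
    using eventually_rel_proj_const_less[OF R assms(1-5)] Qproj(2) by simp
  then have "eventually (\<lambda>j. norm (op_norm N (Q j)) \<le> norm (op_norm N R + 1)) sequentially"
    by eventually_elim (use op_norm_nonneg[OF lin] in auto)
  then have "Bseq (\<lambda>j. op_norm N (Q j))" by (rule Bseq_eventually_mono[OF _ Bfun_const])
  then show ?thesis by (elim BseqE) (metis abs_le_D1 real_norm_def)
qed

lemma projection_limit:
  assumes "subspace Y" and Q: "\<And>j. is_projection (Z j) (Q j)" "\<And>j. op_norm N (Q j) \<le> B"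
    and close: "\<And>j. approx_by N (t j) Y (Z j)" "\<And>j. approx_by N (t j) (Z j) Y" "t \<longlonglongrightarrow> 0"
    and lim: "\<And>x. (\<lambda>j. Q j x) \<longlonglongrightarrow> P x" and "linear P"
  shows "is_projection Y P"
proof -
  have lin: "linear (Q j)" for j using Q(1) by (simp add: is_projection_def)
  have "P x \<in> Y" for x
  proof -
    have "\<forall>j. \<exists>y. y \<in> Y \<and> N (Q j x - y) \<le> t j * N (Q j x)"
      using close(2) Q(1) unfolding approx_by_def is_projection_def by blast
    then obtain y where y: "\<And>j. y j \<in> Y" "\<And>j. N (Q j x - y j) \<le> t j * N (Q j x)"
      by (auto dest!: choice)
    have "y \<longlonglongrightarrow> P x"
    proof (rule tendsto_of_N_diff_le)
      show "N (y j - P x) \<le> t j * N (Q j x) + N (Q j x - P x)" for j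
        using N_triangle_diff[of "y j" "P x" "Q j x"] y(2)[of j] by (simp add: N_minus_commute)
      have "(\<lambda>j. t j * N (Q j x) + N (Q j x - P x)) \<longlonglongrightarrow> 0 * N (P x) + N (P x - P x)"
        by (intro tendsto_intros tendsto_N close lim)
      then show "(\<lambda>j. t j * N (Q j x) + N (Q j x - P x)) \<longlonglongrightarrow> 0" by simp
    qed
    moreover have "eventually (\<lambda>j. y j \<in> Y) sequentially" using y(1) by simp
    ultimately show ?thesis
      using Lim_in_closed_set[OF closed_subspace[OF \<open>subspace Y\<close>]] trivial_limit_sequentially by blast
  qed
  moreover have "P y = y" if "y \<in> Y" for y
  proof -
    have "\<forall>j. \<exists>z. z \<in> Z j \<and> N (y - z) \<le> t j * N y"
      using close(1) \<open>y \<in> Y\<close> unfolding approx_by_def by blast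
    then obtain z where z: "\<And>j. z j \<in> Z j" "\<And>j. N (y - z j) \<le> t j * N y"
      by (auto dest!: choice)
    have "(\<lambda>j. Q j y) \<longlonglongrightarrow> y"
    proof (rule tendsto_of_N_diff_le)
      fix j
      have "Q j y - y = Q j (y - z j) + (z j - y)"
        using Q(1) z(1) by (simp add: is_projection_def linear_diff[OF lin])
      then have "N (Q j y - y) \<le> N (Q j (y - z j)) + N (z j - y)"
        by (metis N_triangle)
      also have "\<dots> = N (Q j (y - z j)) + N (y - z j)"
        by (simp add: N_minus_commute)
      also have "\<dots> \<le> op_norm N (Q j) * N (y - z j) + N (y - z j)"
        using N_le_op_norm_mult[OF lin] by simp
      also have "\<dots> \<le> (B + 1) * N (y - z j)"
        using mult_right_mono[OF Q(2)[of j] N_nonneg[of "y - z j"]] by (simp add: algebra_simps)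
      also have "\<dots> \<le> (B + 1) * (t j * N y)"
        using z(2) op_norm_nonneg[OF lin, of j] Q(2)[of j] by (intro mult_left_mono) auto
      finally show "N (Q j y - y) \<le> (B + 1) * (t j * N y)" .
    next
      show "(\<lambda>j. (B + 1) * (t j * N y)) \<longlonglongrightarrow> 0"
        using tendsto_mult[OF tendsto_const tendsto_mult[OF close(3) tendsto_const]] by simp
    qed
    then show ?thesis using lim[of y] LIMSEQ_unique by blast
  qed
  ultimately show ?thesis using \<open>linear P\<close> by (simp add: is_projection_def)
qed

lemma min_projection_limit:
  assumes "subspace Y" "\<And>j. subspace (Z j)" "\<And>j. dim (Z j) = dim Y"
    and Q: "\<And>j. Q j \<in> min_projections N (Z j)" "\<And>j. op_norm N (Q j) \<le> B"
    and close: "\<And>j. approx_by N (t j) Y (Z j)" "\<And>j. approx_by N (t j) (Z j) Y" "t \<longlonglongrightarrow> 0"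
    and lim: "\<And>x. (\<lambda>j. Q j x) \<longlonglongrightarrow> P x" and "linear P"
  shows "P \<in> min_projections N Y"
proof -
  have Qmin: "is_projection (Z j) (Q j)" "op_norm N (Q j) = rel_proj_const N (Z j)" for j
    using Q(1) by (auto simp: min_projections_def)
  have P: "is_projection Y P"
    using Qmin(1) Q(2) close lim \<open>linear P\<close> by (rule projection_limit[OF \<open>subspace Y\<close>])
  have "op_norm N P \<le> op_norm N R" if R: "is_projection Y R" for R
  proof (rule field_le_epsilon, rule op_norm_least)
    fix e :: real and x assume "0 < e" "x \<in> unit_ball N"
    have "eventually (\<lambda>j. rel_proj_const N (Z j) < op_norm N R + e) sequentially"
      using R assms(1-3) close(2,3) \<open>0 < e\<close> by (intro eventually_rel_proj_const_less) auto
    then have "eventually (\<lambda>j. N (Q j x) \<le> op_norm N R + e) sequentially"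
    proof eventually_elim
      case (elim j)
      have "N (Q j x) \<le> op_norm N (Q j)"
        using N_le_op_norm[OF _ \<open>x \<in> unit_ball N\<close>] Qmin(1)[of j] by (simp add: is_projection_def)
      then show ?case using elim Qmin(2)[of j] by linarith
    qed
    then show "N (P x) \<le> op_norm N R + e"
      by (intro tendsto_upperbound[OF tendsto_N[OF lim]]) auto
  qed
  then have "op_norm N P \<le> rel_proj_const N Y"
    using projection_exists[OF \<open>subspace Y\<close>] by (intro rel_proj_const_greatest)
  with rel_proj_const_le[OF P] P show ?thesis by (simp add: min_projections_def)
qed

lemma op_norm_bounded_convergent_subseq:
  fixes Q :: "nat \<Rightarrow> real^'n \<Rightarrow> real^'n"
  assumes "\<And>j. linear (Q j)" "\<And>j. op_norm N (Q j) \<le> B"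
  shows "\<exists>\<sigma> P. strict_mono \<sigma> \<and> linear P \<and> (\<forall>x. (\<lambda>j. Q (\<sigma> j) x) \<longlonglongrightarrow> P x)"
proof -
  obtain c C where c: "0 < c" "0 < C" "\<And>x. c * norm x \<le> N x \<and> N x \<le> C * norm x"
    using N_equiv_norm by blast
  have B: "0 \<le> B" using op_norm_nonneg[OF assms(1), of 0] assms(2)[of 0] by linarith
  have "norm (Q j x) \<le> (B * C / c) * norm x" for j x
  proof -
    have "c * norm (Q j x) \<le> N (Q j x)" using c(3) by blast
    also have "\<dots> \<le> op_norm N (Q j) * N x" by (rule N_le_op_norm_mult[OF assms(1)])
    also have "\<dots> \<le> B * (C * norm x)"
      using assms(2) c(3) B by (intro mult_mono) (auto simp: N_nonneg)
    finally show ?thesis using c(1) by (simp add: field_simps)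
  qed
  then show ?thesis
    using linear_maps_convergent_subseq[of Q "B * C / c"] assms(1) B c by simp
qed

lemma finite_extreme_points_unit_ball:
  "polytope (unit_ball N) \<Longrightarrow> finite {x. x extreme_point_of unit_ball N}"
  by (simp add: finite_polyhedron_extreme_points polytope_imp_polyhedron)

text \<open>The dual ball of a polytope S is the polyhedron cut out by the constraints |s \<bullet> u| \<le> 1
  for the finitely many vertices s of S.\<close>
lemma finite_extreme_points_dual_unit_ball:
  assumes "polytope (unit_ball N)"
  shows "finite {u. u extreme_point_of dual_unit_ball N}"
proof -
  obtain S where S: "finite S" "unit_ball N = convex hull S"
    using assms unfolding polytope_def by blast
  let ?H = "\<lambda>s. {u. s \<bullet> u \<le> 1} \<inter> {u. (- s) \<bullet> u \<le> 1}"
  have "dual_unit_ball N = (\<Inter>s\<in>S. ?H s)"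
  proof (intro set_eqI iffI)
    fix u assume "u \<in> dual_unit_ball N"
    then show "u \<in> (\<Inter>s\<in>S. ?H s)"
      using S(2) hull_subset[of S convex]
      unfolding dual_unit_ball_def unit_ball_def by (fastforce simp: inner_commute abs_le_iff)
  next
    fix u assume u: "u \<in> (\<Inter>s\<in>S. ?H s)"
    have "{x. \<bar>u \<bullet> x\<bar> \<le> 1} = {x. u \<bullet> x \<le> 1} \<inter> {x. (- u) \<bullet> x \<le> 1}"
      by (auto simp: abs_le_iff)
    then have "convex {x. \<bar>u \<bullet> x\<bar> \<le> 1}"
      by (simp add: convex_Int convex_halfspace_le convex_halfspace_ge)
    moreover have "S \<subseteq> {x. \<bar>u \<bullet> x\<bar> \<le> 1}" using u by (auto simp: inner_commute abs_le_iff)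
    ultimately have "convex hull S \<subseteq> {x. \<bar>u \<bullet> x\<bar> \<le> 1}" by (simp add: hull_minimal)
    then show "u \<in> dual_unit_ball N" using S(2) unfolding dual_unit_ball_def unit_ball_def by auto
  qed
  moreover have "polyhedron (\<Inter>s\<in>S. ?H s)"
    using S(1) by (intro polyhedron_Inter) (auto simp: polyhedron_halfspace_le polyhedron_halfspace_ge)
  ultimately show ?thesis by (simp add: finite_polyhedron_extreme_points)
qed

text \<open>Norming pairs are upper semicontinuous: a pair that does not norm the limit P misses
  the norm of P by a positive margin, hence eventually misses the norm of Q j.\<close>
lemma eventually_norming_pairs_subset:
  assumes "polytope (unit_ball N)" "linear P" "\<And>j. linear (Q j)" "\<And>x. ((\<lambda>j. Q j x) \<longlongrightarrow> P x) F"
  shows "eventually (\<lambda>j. norming_pairs N (Q j) \<subseteq> norming_pairs N P) F"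
proof -
  define EF where
    "EF = {x. x extreme_point_of unit_ball N} \<times> {u. u extreme_point_of dual_unit_ball N}"
  have "finite EF"
    unfolding EF_def using assms(1)
    by (simp add: finite_extreme_points_unit_ball finite_extreme_points_dual_unit_ball)
  moreover have "eventually (\<lambda>j. (x, u) \<notin> norming_pairs N (Q j)) F"
    if "(x, u) \<in> EF - norming_pairs N P" for x u
  proof -
    have x: "x \<in> unit_ball N" and u: "u \<in> dual_unit_ball N" and "u \<bullet> P x \<noteq> op_norm N P"
      using that unfolding EF_def norming_pairs_def extreme_point_of_def by auto
    moreover have "u \<bullet> P x \<le> op_norm N P"
      using inner_le_N[OF u] N_le_op_norm[OF assms(2) x] by (rule order_trans)
    ultimately obtain c where c: "u \<bullet> P x < c" "c < op_norm N P"
      using dense[of "u \<bullet> P x" "op_norm N P"] by fastforce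
    obtain x0 where x0: "x0 \<in> unit_ball N" "c < N (P x0)" using less_op_normD[OF c(2)] by blast
    have "eventually (\<lambda>j. c < N (Q j x0)) F"
      using order_tendstoD(1)[OF tendsto_N[OF assms(4)] x0(2)] .
    moreover have "eventually (\<lambda>j. u \<bullet> Q j x < c) F"
      using order_tendstoD(2)[OF tendsto_inner[OF tendsto_const assms(4)] c(1)] .
    ultimately show ?thesis
    proof eventually_elim
      case (elim j)
      then show ?case
        using N_le_op_norm[OF assms(3) x0(1), of j] by (auto simp: norming_pairs_def)
    qed
  qed
  ultimately have "eventually (\<lambda>j. \<forall>p\<in>EF - norming_pairs N P. p \<notin> norming_pairs N (Q j)) F"
    by (intro eventually_ball_finite) auto
  moreover have "norming_pairs N R \<subseteq> EF" for R unfolding EF_def norming_pairs_def by auto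
  ultimately show ?thesis by (auto elim!: eventually_mono)
qed

lemma exists_min_projection_norming_pairs_superset:
  fixes Z :: "nat \<Rightarrow> (real^'n) set" and Q :: "nat \<Rightarrow> real^'n \<Rightarrow> real^'n"
  assumes "polytope (unit_ball N)" "subspace Y" "dim Y > 0"
    and Z: "\<And>j. subspace (Z j)" "\<And>j. dim (Z j) = dim Y"
    and r: "\<And>j. 0 < r j" "r \<longlonglongrightarrow> 0" "\<And>j. subspace_dist N Y (Z j) \<le> r j"
    and Q: "\<And>j. Q j \<in> min_projections N (Z j)"
  shows "\<exists>P\<in>min_projections N Y. \<exists>j. norming_pairs N (Q j) \<subseteq> norming_pairs N P"
proof -
  define t where "t j = 2 * r j" for j
  have close: "approx_by N (t j) Y (Z j)" "approx_by N (t j) (Z j) Y" for j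
    unfolding t_def
    using approx_by_of_subspace_dist_le[OF \<open>subspace Y\<close> \<open>dim Y > 0\<close> Z(1) _ r(1) r(3)] Z(2) assms(3)
    by auto
  have "t \<longlonglongrightarrow> 0" unfolding t_def using tendsto_mult[OF tendsto_const r(2), of 2] by simp
  have lin: "linear (Q j)" for j using Q by (simp add: min_projections_def is_projection_def)
  obtain B where B: "\<And>j. op_norm N (Q j) \<le> B"
    using min_projections_op_norm_bounded[OF \<open>subspace Y\<close> Z close(2) \<open>t \<longlonglongrightarrow> 0\<close> Q] by blast
  obtain \<sigma> P where \<sigma>: "strict_mono \<sigma>" "linear P" "\<And>x. (\<lambda>j. Q (\<sigma> j) x) \<longlonglongrightarrow> P x"
    using op_norm_bounded_convergent_subseq[of Q B] lin B by blast
  have "P \<in> min_projections N Y"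
    using \<open>subspace Y\<close> Z Q B close \<sigma> LIMSEQ_subseq_LIMSEQ[OF \<open>t \<longlonglongrightarrow> 0\<close> \<sigma>(1)]
    by (intro min_projection_limit[of Y "Z \<circ> \<sigma>" "Q \<circ> \<sigma>" B "t \<circ> \<sigma>"]) auto
  moreover have "eventually (\<lambda>j. norming_pairs N (Q (\<sigma> j)) \<subseteq> norming_pairs N P) sequentially"
    using assms(1) \<sigma> lin by (intro eventually_norming_pairs_subset)
  ultimately show ?thesis unfolding eventually_sequentially by blast
qed

end

theorem mainTheorem16:
  fixes N :: "real^'n \<Rightarrow> real" and Y :: "(real^'n) set" and k m :: nat
  assumes "polyhedral_norm N"
    and "2 \<le> k" and "k \<le> CARD('n) - 1"
    and "subspace Y" and "dim Y = k"
    and "0 < m"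
    and "\<forall>P\<in>min_projections N Y. finite (norming_pairs N P) \<and> card (norming_pairs N P) \<le> m"
  shows "\<exists>r>0. \<forall>Y0. subspace Y0 \<and> dim Y0 = k \<and> subspace_dist N Y Y0 \<le> r \<longrightarrow>
           (\<forall>P\<in>min_projections N Y0. finite (norming_pairs N P) \<and> card (norming_pairs N P) \<le> m)"
proof (rule ccontr)
  define good where "good P \<longleftrightarrow> finite (norming_pairs N P) \<and> card (norming_pairs N P) \<le> m" for P
  assume "\<not> ?thesis"
  then have "\<forall>j. \<exists>Z Q. subspace Z \<and> dim Z = k \<and> subspace_dist N Y Z \<le> inverse (real (Suc j))
      \<and> Q \<in> min_projections N Z \<and> \<not> good Q"
    unfolding good_def by (metis inverse_positive_iff_positive of_nat_0_less_iff zero_less_Suc)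
  then obtain Z Q where Z: "\<And>j. subspace (Z j)" "\<And>j. dim (Z j) = k"
      "\<And>j. subspace_dist N Y (Z j) \<le> inverse (real (Suc j))"
    and Q: "\<And>j. Q j \<in> min_projections N (Z j)" "\<And>j. \<not> good (Q j)"
    by metis
  obtain P j where "P \<in> min_projections N Y" "norming_pairs N (Q j) \<subseteq> norming_pairs N P"
    using exists_min_projection_norming_pairs_superset[of N Y Z "\<lambda>j. inverse (real (Suc j))" Q]
      assms(1-5) Z Q(1) LIMSEQ_inverse_real_of_nat
    by (auto simp: polyhedral_norm_def)
  then have "good (Q j)"
    using assms(7) finite_subset card_mono unfolding good_def by (metis le_trans)
  with Q(2) show False by blast
qed

end
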